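(* Under the hypotheses and notation of the following context, every basis $[\vec b_1,\dots,\vec b_n]$ of $\tilde{\mathcal{L}}$ that minimizes $\max_{1\le i\le n}\|\vec b_i\|_q$ over all bases of $\tilde{\mathcal{L}}$ does not contain $\pm\vec v_1$, the shortest nonzero vector of $\tilde{\mathcal{L}}$.
   Context: Let $q\in\mathbb{N}_+$, $p\ge7$ prime, $n\ge2$, $\sigma\in\{2,3\}^{n-1}$ with $\sum_{i=1}^{n-1}\sigma_i^q=p^q-1$ and $\|k\sigma\bmod p\|_q>\|\sigma\bmod p\|_q$ for all integers $k\not\equiv0,\pm1\pmod p$, where $|\alpha|_p=\min_{z\in\mathbb{Z}}|\alpha-zp|$ and $\|\vec x\bmod p\|_q=(\sum_i|x_i|_p^q)^{1/q}$; if $q\ge2$ assume $4n-3>2p$. Put $\vec u=(1,\sigma)\in\mathbb{R}^n$, $W_i=p\vec e_i$, $\mathcal{L}_+=\operatorname{span}_{\mathbb{Z}}(W_1,\dots,W_n,\vec u)$, and fix $R>p$ with $\mathcal{L}_+\cap\mathcal{B}_q(R)=\{\vec0,\pm W_1,\dots,\pm W_n,\pm\vec u\}$, where $\mathcal{B}_q(r)=\{\vec x:\|\vec x\|_q<r\}$ and $\|\vec x\|_q=(\sum_i|x_i|^q)^{1/q}$. Fix $\varepsilon>0$ with $\varepsilon<\frac{R-p}{2}$ and $\varepsilon^q<\frac{p^q(R^q-p^q)}{((n-1)(p-1)+1)^q}$. In $\mathbb{R}^{n+1}$ let $\vec v_1=(W_1,\varepsilon)$, $\vec v_i=(W_i,2\varepsilon)$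 for $2\le i\le n$, $\tilde{\vec u}=\frac1p\sum_{i=1}^nu_i\vec v_i$, and $\tilde{\mathcal{L}}=\operatorname{span}_{\mathbb{Z}}(\vec v_1,\dots,\vec v_n,\tilde{\vec u})$, a lattice of rank $n$. *)

theory Defs
  imports Complex_Main "HOL-Computational_Algebra.Primes"
begin

text \<open>Vectors of R^m are represented as functions nat => real, coordinates indexed by 1..m.\<close>

definition qnorm :: "nat \<Rightarrow> nat \<Rightarrow> (nat \<Rightarrow> real) \<Rightarrow> real" where
  "qnorm q m x = (\<Sum>i\<in>{1..m}. \<bar>x i\<bar> ^ q) powr (1 / real q)"

definition qball :: "nat \<Rightarrow> nat \<Rightarrow> real \<Rightarrow> (nat \<Rightarrow> real) set" where
  "qball q m r = {x. qnorm q m x < r}"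

definition absp :: "nat \<Rightarrow> real \<Rightarrow> real" where
  "absp p a = Inf {\<bar>a - of_int z * real p\<bar> | z. True}"

definition qnorm_mod :: "nat \<Rightarrow> nat \<Rightarrow> nat \<Rightarrow> (nat \<Rightarrow> real) \<Rightarrow> real" where
  "qnorm_mod q p m x = (\<Sum>i\<in>{1..m}. absp p (x i) ^ q) powr (1 / real q)"

definition int_span :: "(nat \<Rightarrow> real) set \<Rightarrow> (nat \<Rightarrow> real) set" where
  "int_span B = {(\<lambda>j. \<Sum>b\<in>F. of_int (c b) * b j) | F c. finite F \<and> F \<subseteq> B}"

definition is_lattice_basis :: "(nat \<Rightarrow> real) set \<Rightarrow> nat \<Rightarrow> (nat \<Rightarrow> nat \<Rightarrow> real) \<Rightarrow> bool" where
  "is_lattice_basis L n b \<longleftrightarrow> (\<forall>i\<in>{1..n}. b i \<in> L) \<and>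
     (\<forall>x\<in>L. \<exists>!c::nat \<Rightarrow> int. (\<forall>i. i \<notin> {1..n} \<longrightarrow> c i = 0) \<and>
                 x = (\<lambda>j. \<Sum>i\<in>{1..n}. of_int (c i) * b i j))"

definition unitvec :: "nat \<Rightarrow> nat \<Rightarrow> real" where
  "unitvec i = (\<lambda>j. if j = i then 1 else 0)"

end

theory Submission
  imports Defs
begin

(* The lattice Lt is the image of Lp under the linear map
   y \<mapsto> (y\<^sub>1, ..., y\<^sub>n, \<Sum>\<^sub>m w\<^sub>m y\<^sub>m) with w\<^sub>1 = \<epsilon>/p and w\<^sub>m = 2\<epsilon>/p otherwise, which does not
   decrease q-norms, so the only vectors of Lt of norm below R are 0, \<plusminus>ut and \<plusminus>v\<^sub>1, ..., \<plusminus>v\<^sub>n.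
   The basis (ut, v\<^sub>2, ..., v\<^sub>n) has all its norms below R, hence a basis minimising the largest
   norm consists of such vectors. It must contain \<plusminus>ut, since otherwise every first coordinate of
   the lattice would lie in p\<int>, whereas ut\<^sub>1 = 1; and it must contain \<plusminus>v\<^sub>k for every k \<ge> 2, since
   otherwise every k-th coordinate would lie in \<sigma>\<^sub>k\<^sub>-\<^sub>1\<int>, which does not contain p. Together with
   \<plusminus>v\<^sub>1 this would be n + 1 distinct vectors in a basis of size n. *)

definition int_comb :: "'i set \<Rightarrow> ('i \<Rightarrow> int) \<Rightarrow> ('i \<Rightarrow> nat \<Rightarrow> real) \<Rightarrow> nat \<Rightarrow> real" where
  "int_comb I c h = (\<lambda>j. \<Sum>i\<in>I. of_int (c i) * h i j)"

lemma int_comb_apply: "int_comb I c h j = (\<Sum>i\<in>I. of_int (c i) * h i j)"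
  by (simp add: int_comb_def)

lemma int_comb_diff: "int_comb I (\<lambda>i. c i - d i) h = (\<lambda>j. int_comb I c h j - int_comb I d h j)"
  by (simp add: int_comb_def fun_eq_iff algebra_simps sum_subtractf)

lemma int_comb_cong:
  "(\<And>i. i \<in> I \<Longrightarrow> c i = d i) \<Longrightarrow> (\<And>i. i \<in> I \<Longrightarrow> h i = h' i) \<Longrightarrow> int_comb I c h = int_comb I d h'"
  by (simp add: int_comb_def)

lemma int_comb_unit:
  assumes "finite I" "k \<in> I"
  shows "int_comb I (\<lambda>i. if i = k then 1 else 0) h = h k"
proof
  fix j
  have "int_comb I (\<lambda>i. if i = k then 1 else 0) h j = (\<Sum>i\<in>I. if i = k then h k j else 0)"
    unfolding int_comb_def by (rule sum.cong) auto
  then show "int_comb I (\<lambda>i. if i = k then 1 else 0) h j = h k j"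
    using assms by simp
qed

lemma int_comb_of_int_combs:
  assumes "\<forall>i\<in>I. h i \<in> range (\<lambda>c. int_comb K c b)"
  shows "int_comb I a h \<in> range (\<lambda>c. int_comb K c b)"
proof -
  have "\<forall>i\<in>I. \<exists>c. h i = int_comb K c b" using assms by blast
  then obtain c where c: "\<forall>i\<in>I. h i = int_comb K (c i) b"
    by (rule bchoice[elim_format]) blast
  have "int_comb I a h j = int_comb K (\<lambda>k. \<Sum>i\<in>I. a i * c i k) b j" for j
  proof -
    have "int_comb I a h j = (\<Sum>i\<in>I. \<Sum>k\<in>K. of_int (a i) * (of_int (c i k) * b k j))"
      unfolding int_comb_def by (rule sum.cong) (simp_all add: c sum_distrib_left int_comb_def)
    also have "\<dots> = int_comb K (\<lambda>k. \<Sum>i\<in>I. a i * c i k) b j"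
      unfolding int_comb_def by (subst sum.swap) (simp add: sum_distrib_right mult.assoc)
    finally show ?thesis .
  qed
  then have "int_comb I a h = int_comb K (\<lambda>k. \<Sum>i\<in>I. a i * c i k) b" by (rule ext)
  then show ?thesis by blast
qed

lemma int_span_image:
  assumes "finite I"
  shows "int_span (h ` I) = range (\<lambda>a. int_comb I a h)"
proof
  show "int_span (h ` I) \<subseteq> range (\<lambda>a. int_comb I a h)"
  proof
    fix x assume "x \<in> int_span (h ` I)"
    then obtain F c where x: "x = int_comb F c id" and F: "F \<subseteq> h ` I"
      unfolding int_span_def int_comb_def by auto
    have "\<forall>y\<in>F. id y \<in> range (\<lambda>a. int_comb I a h)"
    proof
      fix y assume "y \<in> F"
      then obtain i where "i \<in> I" "y = h i" using F by blast
      then have "id y = int_comb I (\<lambda>k. if k = i then 1 else 0) h"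
        using int_comb_unit[OF assms] by simp
      then show "id y \<in> range (\<lambda>a. int_comb I a h)" by blast
    qed
    then show "x \<in> range (\<lambda>a. int_comb I a h)"
      unfolding x by (rule int_comb_of_int_combs)
  qed
next
  show "range (\<lambda>a. int_comb I a h) \<subseteq> int_span (h ` I)"
  proof
    fix x assume "x \<in> range (\<lambda>a. int_comb I a h)"
    then obtain a where x: "x = int_comb I a h" by blast
    define c where "c y = (\<Sum>i\<in>{i\<in>I. h i = y}. a i)" for y
    have "(\<Sum>i\<in>I. of_int (a i) * h i j) = (\<Sum>y\<in>h ` I. of_int (c y) * y j)" for j
      unfolding sum.image_gen[OF assms, of "\<lambda>i. of_int (a i) * h i j" h]
      by (rule sum.cong) (auto simp: c_def sum_distrib_right intro!: sum.cong)
    then show "x \<in> int_span (h ` I)"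
      unfolding int_span_def x int_comb_def using assms by blast
  qed
qed

lemma int_span_generator:
  assumes "finite I" "k \<in> I"
  shows "h k \<in> int_span (h ` I)"
proof -
  have "h k = int_comb I (\<lambda>i. if i = k then 1 else 0) h"
    using int_comb_unit[OF assms] by simp
  then show ?thesis unfolding int_span_image[OF assms(1)] by blast
qed

lemma is_lattice_basisI:
  assumes mem: "\<forall>i\<in>{1..n}. b i \<in> L"
    and span: "L \<subseteq> range (\<lambda>c. int_comb {1..n} c b)"
    and indep: "\<And>c. int_comb {1..n} c b = (\<lambda>j. 0) \<Longrightarrow> \<forall>i\<in>{1..n}. c i = 0"
  shows "is_lattice_basis L n b"
  unfolding is_lattice_basis_def
proof (intro conjI mem ballI)
  fix x assume "x \<in> L"
  then obtain c where c: "x = int_comb {1..n} c b" using span by blast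
  define c' where "c' i = (if i \<in> {1..n} then c i else 0)" for i
  have c'x: "x = int_comb {1..n} c' b"
    unfolding c by (rule int_comb_cong) (simp_all add: c'_def)
  have "d = c'" if "\<forall>i. i \<notin> {1..n} \<longrightarrow> d i = 0" "x = int_comb {1..n} d b" for d
  proof -
    have "int_comb {1..n} d b = int_comb {1..n} c' b" using that(2) c'x by simp
    then have "int_comb {1..n} (\<lambda>i. d i - c' i) b = (\<lambda>j. 0)"
      by (simp add: int_comb_diff)
    then have dc': "\<forall>i\<in>{1..n}. d i - c' i = 0" by (rule indep)
    show "d = c'"
    proof
      fix i
      show "d i = c' i"
      proof (cases "i \<in> {1..n}")
        case True
        with dc' show ?thesis by simp
      next
        case False
        with that(1) show ?thesis by (simp only: c'_def if_False) simp
      qed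
    qed
  qed
  then show "\<exists>!c. (\<forall>i. i \<notin> {1..n} \<longrightarrow> c i = 0) \<and> x = (\<lambda>j. \<Sum>i\<in>{1..n}. of_int (c i) * b i j)"
    using c'x by (intro ex1I[of _ c']) (auto simp: c'_def int_comb_def)
qed

lemma lattice_basis_mem: "is_lattice_basis L n b \<Longrightarrow> i \<in> {1..n} \<Longrightarrow> b i \<in> L"
  by (simp add: is_lattice_basis_def)

lemma lattice_basis_coord_multiple:
  assumes "is_lattice_basis L n b" "x \<in> L"
    and "\<forall>k\<in>{1..n}. \<exists>m::int. b k j = d * of_int m"
  shows "\<exists>m::int. x j = d * of_int m"
proof -
  obtain c where c: "x = (\<lambda>j. \<Sum>k\<in>{1..n}. of_int (c k) * b k j)"
    using assms(1,2) unfolding is_lattice_basis_def by blast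
  obtain m where m: "\<forall>k\<in>{1..n}. b k j = d * of_int (m k)"
    using bchoice[OF assms(3)] by blast
  have "x j = (\<Sum>k\<in>{1..n}. of_int (c k) * (d * of_int (m k)))"
    unfolding c using m by (intro sum.cong) auto
  also have "\<dots> = d * of_int (\<Sum>k\<in>{1..n}. c k * m k)"
    by (simp add: sum_distrib_left mult.left_commute)
  finally show ?thesis by (rule exI)
qed

lemma minimal_basis_bounded:
  fixes N :: "(nat \<Rightarrow> real) \<Rightarrow> real"
  assumes "n \<ge> 1" "is_lattice_basis L n b0" "\<forall>i\<in>{1..n}. N (b0 i) < R"
    and min: "\<forall>b'. is_lattice_basis L n b' \<longrightarrow> (MAX i\<in>{1..n}. N (b i)) \<le> (MAX i\<in>{1..n}. N (b' i))"
    and "k \<in> {1..n}"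
  shows "N (b k) < R"
proof -
  have "N (b k) \<le> (MAX i\<in>{1..n}. N (b i))" using assms(5) by (intro Max_ge) auto
  also have "\<dots> \<le> (MAX i\<in>{1..n}. N (b0 i))" using min assms(2) by blast
  also have "\<dots> < R" using assms(1,3) by (subst Max_less_iff) auto
  finally show ?thesis .
qed

lemma qnorm_mono:
  assumes "m \<le> m'" "\<And>i. i \<in> {1..m} \<Longrightarrow> x i = y i"
  shows "qnorm q m x \<le> qnorm q m' y"
proof -
  have "(\<Sum>i\<in>{1..m}. \<bar>x i\<bar> ^ q) \<le> (\<Sum>i\<in>{1..m'}. \<bar>y i\<bar> ^ q)"
    using assms by (simp add: sum_mono2)
  then show ?thesis unfolding qnorm_def by (intro powr_mono2) (auto intro: sum_nonneg)
qed

lemma qnorm_less: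
  assumes "q \<ge> 1" "R > 0" "(\<Sum>i\<in>{1..m}. \<bar>x i\<bar> ^ q) < R ^ q"
  shows "qnorm q m x < R"
proof -
  have "qnorm q m x < (R ^ q) powr (1 / real q)"
    unfolding qnorm_def using assms by (intro powr_less_mono2) (auto intro: sum_nonneg)
  also have "\<dots> = R"
    using assms by (simp add: powr_realpow[symmetric] powr_powr)
  finally show ?thesis .
qed

lemma add_pow_le_pow_add:
  fixes a b :: real
  assumes "a \<ge> 0" "b \<ge> 0" "q \<ge> 1"
  shows "a ^ q + b ^ q \<le> (a + b) ^ q"
  using assms(3)
proof (induction q rule: dec_induct)
  case (step m)
  have "a ^ Suc m + b ^ Suc m \<le> (a + b) * (a ^ m + b ^ m)"
    using assms by (simp add: algebra_simps)
  also have "\<dots> \<le> (a + b) * (a + b) ^ m"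
    using step assms by (intro mult_left_mono) auto
  finally show ?case by simp
qed simp

definition lift :: "nat \<Rightarrow> (nat \<Rightarrow> real) \<Rightarrow> (nat \<Rightarrow> real) \<Rightarrow> nat \<Rightarrow> real" where
  "lift n w y = (\<lambda>j. if j \<in> {1..n} then y j else if j = n + 1 then (\<Sum>m\<in>{1..n}. w m * y m) else 0)"

lemma lift_inside: "j \<in> {1..n} \<Longrightarrow> lift n w y j = y j"
  by (simp add: lift_def)

lemma lift_last: "lift n w y (Suc n) = (\<Sum>m\<in>{1..n}. w m * y m)"
  by (simp add: lift_def)

lemma lift_outside:
  assumes "j \<notin> {1..n}" "j \<noteq> n + 1"
  shows "lift n w y j = 0"
  unfolding lift_def by (simp only: if_not_P[OF assms(1)] if_not_P[OF assms(2)])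

lemma lift_int_comb: "lift n w (int_comb I a h) = int_comb I a (\<lambda>i. lift n w (h i))"
proof
  fix j
  consider "j \<in> {1..n}" | "j = n + 1" | "j \<notin> {1..n}" "j \<noteq> n + 1" by blast
  then show "lift n w (int_comb I a h) j = int_comb I a (\<lambda>i. lift n w (h i)) j"
  proof cases
    case 2
    then show ?thesis
      by (simp add: lift_last int_comb_def sum_distrib_left mult.left_commute) (rule sum.swap)
  qed (simp_all add: lift_inside lift_outside int_comb_def)
qed

lemma lift_uminus: "lift n w (- y) = - lift n w y"
  by (rule ext) (simp add: lift_def sum_negf)

lemma lift_zero: "lift n w (\<lambda>j. 0) = (\<lambda>j. 0)"
  by (rule ext) (simp add: lift_def)

lemma qnorm_le_qnorm_lift: "qnorm q n y \<le> qnorm q (n + 1) (lift n w y)"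
  by (rule qnorm_mono) (simp_all add: lift_inside)

locale lifted_lattice =
  fixes q p n :: nat and \<sigma> :: "nat \<Rightarrow> int" and R \<epsilon> :: real
    and W :: "nat \<Rightarrow> nat \<Rightarrow> real" and u :: "nat \<Rightarrow> real"
    and v :: "nat \<Rightarrow> nat \<Rightarrow> real" and ut :: "nat \<Rightarrow> real"
    and Lp Lt :: "(nat \<Rightarrow> real) set"
  assumes q_pos: "q \<ge> 1"
    and p_prime: "prime p" and p_ge: "p \<ge> 7"
    and n_ge: "n \<ge> 2"
    and sigma_vals: "\<forall>i\<in>{1..n-1}. \<sigma> i \<in> {2, 3}"
    and sigma_sum: "(\<Sum>i\<in>{1..n-1}. \<sigma> i ^ q) = int p ^ q - 1"
    and u_def: "u = (\<lambda>j. if j = 1 then 1 else if 2 \<le> j \<and> j \<le> n then of_int (\<sigma> (j - 1)) else 0)"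
    and W_def: "\<forall>i. W i = (\<lambda>j. real p * unitvec i j)"
    and Lp_def: "Lp = int_span ({W i | i. i \<in> {1..n}} \<union> {u})"
    and R_gt: "R > real p"
    and R_ball: "Lp \<inter> qball q n R = {(\<lambda>j. 0)} \<union> {W i | i. i \<in> {1..n}} \<union> {(\<lambda>j. - W i j) | i. i \<in> {1..n}} \<union> {u, (\<lambda>j. - u j)}"
    and eps_pos: "\<epsilon> > 0"
    and eps1: "\<epsilon> < (R - real p) / 2"
    and eps2: "\<epsilon> ^ q < real p ^ q * (R ^ q - real p ^ q) / (real ((n - 1) * (p - 1) + 1)) ^ q"
    and v_def: "\<forall>i. v i = (\<lambda>j. if j \<le> n then W i j else if j = n + 1 then (if i = 1 then \<epsilon> else 2 * \<epsilon>) else 0)"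
    and ut_def: "ut = (\<lambda>j. (1 / real p) * (\<Sum>i\<in>{1..n}. u i * v i j))"
    and Lt_def: "Lt = int_span ({v i | i. i \<in> {1..n}} \<union> {ut})"
begin

definition lift_weight :: "nat \<Rightarrow> real" where
  "lift_weight m = \<epsilon> / real p * (if m = 1 then 1 else 2)"

definition gen_Lt :: "nat \<Rightarrow> nat \<Rightarrow> real" where
  "gen_Lt k = (if k = 0 then ut else v k)"

definition gen_Lp :: "nat \<Rightarrow> nat \<Rightarrow> real" where
  "gen_Lp k = (if k = 0 then u else W k)"

lemma p_pos: "real p > 0"
  using p_ge by simp

lemma W_apply: "W k j = (if j = k then real p else 0)"
  using W_def by (simp add: unitvec_def)

lemma v_apply: "j \<le> n \<Longrightarrow> v k j = (if j = k then real p else 0)"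
  using v_def by (simp add: W_apply)

lemma v_last: "v k (Suc n) = (if k = 1 then \<epsilon> else 2 * \<epsilon>)"
  using v_def by simp

lemma v_beyond: "Suc n < j \<Longrightarrow> v k j = 0"
  using v_def by simp

lemma u_1: "u 1 = 1"
  using u_def by simp

lemma u_sigma: "j \<in> {2..n} \<Longrightarrow> u j = of_int (\<sigma> (j - 1))"
  using u_def by simp

lemma sigma_2_3:
  assumes "j \<in> {2..n}"
  shows "\<sigma> (j - 1) = 2 \<or> \<sigma> (j - 1) = 3"
proof -
  have "j - 1 \<in> {1..n-1}" using assms by auto
  then show ?thesis using sigma_vals by blast
qed

lemma u_2_3: "j \<in> {2..n} \<Longrightarrow> u j = 2 \<or> u j = 3"
  using u_sigma sigma_2_3 by fastforce

lemma u_bounds: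
  assumes "j \<in> {1..n}"
  shows "1 \<le> u j \<and> u j \<le> 3"
proof (cases "j = 1")
  case False
  then have "j \<in> {2..n}" using assms by auto
  then show ?thesis using u_2_3 by fastforce
qed (use u_1 in simp)

lemma v_lift: "k \<in> {1..n} \<Longrightarrow> v k = lift n lift_weight (W k)"
proof
  fix j assume k: "k \<in> {1..n}"
  consider "j \<in> {1..n}" | "j = Suc n" | "j = 0" | "Suc n < j" by fastforce
  then show "v k j = lift n lift_weight (W k) j"
  proof cases
    case 2
    have "(\<Sum>m\<in>{1..n}. lift_weight m * W k m) = (\<Sum>m\<in>{1..n}. if m = k then lift_weight k * real p else 0)"
      by (rule sum.cong) (simp_all add: W_apply)
    also have "\<dots> = lift_weight k * real p"
      using k by simp
    finally have "(\<Sum>m\<in>{1..n}. lift_weight m * W k m) = lift_weight k * real p" .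
    then show ?thesis using 2 p_pos by (simp add: lift_last v_last lift_weight_def)
  qed (use k in \<open>simp_all add: lift_inside lift_outside v_apply v_beyond W_apply\<close>)
qed

lemma ut_lift: "ut = lift n lift_weight u"
proof
  fix j
  consider "j \<in> {1..n}" | "j = Suc n" | "j = 0 \<or> Suc n < j" by fastforce
  then show "ut j = lift n lift_weight u j"
  proof cases
    case 1
    have "(\<Sum>i\<in>{1..n}. u i * v i j) = (\<Sum>i\<in>{1..n}. if i = j then u j * real p else 0)"
      using 1 by (intro sum.cong) (simp_all add: v_apply)
    then show ?thesis using 1 p_pos by (simp add: ut_def lift_inside)
  next
    case 2
    have "ut j = (\<Sum>i\<in>{1..n}. 1 / real p * (u i * v i (Suc n)))"
      using 2 by (simp add: ut_def sum_distrib_left)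
    also have "\<dots> = (\<Sum>m\<in>{1..n}. lift_weight m * u m)"
      by (rule sum.cong) (simp_all add: v_last lift_weight_def)
    finally show ?thesis using 2 by (simp add: lift_last)
  next
    case 3
    then have "(\<Sum>i\<in>{1..n}. u i * v i j) = 0"
      by (intro sum.neutral) (auto simp: v_apply v_beyond)
    then show ?thesis using 3 by (auto simp: ut_def lift_outside)
  qed
qed

lemma ut_apply: "j \<in> {1..n} \<Longrightarrow> ut j = u j"
  by (simp add: ut_lift lift_inside)

lemma gen_Lt_lift:
  assumes "k \<in> {0..n}"
  shows "gen_Lt k = lift n lift_weight (gen_Lp k)"
proof (cases "k = 0")
  case True
  then show ?thesis by (simp add: gen_Lt_def gen_Lp_def) (rule ut_lift)
next
  case False
  then show ?thesis using assms by (simp add: gen_Lt_def gen_Lp_def v_lift)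
qed

lemma Lt_int_span: "Lt = int_span (gen_Lt ` {0..n})"
proof -
  have "{v i | i. i \<in> {1..n}} \<union> {ut} = gen_Lt ` {0..n}"
    by (auto simp: gen_Lt_def image_iff atLeast0AtMost)
  then show ?thesis using Lt_def by simp
qed

lemma Lp_int_span: "Lp = int_span (gen_Lp ` {0..n})"
proof -
  have "{W i | i. i \<in> {1..n}} \<union> {u} = gen_Lp ` {0..n}"
    by (auto simp: gen_Lp_def image_iff atLeast0AtMost)
  then show ?thesis using Lp_def by simp
qed

lemma Lt_in_lift_Lp:
  assumes "x \<in> Lt"
  obtains y where "y \<in> Lp" "x = lift n lift_weight y"
proof -
  obtain a where "x = int_comb {0..n} a gen_Lt"
    using assms unfolding Lt_int_span int_span_image[OF finite_atLeastAtMost] by blast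
  also have "\<dots> = int_comb {0..n} a (\<lambda>k. lift n lift_weight (gen_Lp k))"
    by (rule int_comb_cong) (simp_all add: gen_Lt_lift)
  also have "\<dots> = lift n lift_weight (int_comb {0..n} a gen_Lp)"
    by (rule lift_int_comb[symmetric])
  finally show ?thesis
    using that unfolding Lp_int_span int_span_image[OF finite_atLeastAtMost] by blast
qed

definition short_vectors :: "(nat \<Rightarrow> real) set" where
  "short_vectors = insert (\<lambda>j. 0) (\<Union>k\<in>{0..n}. {gen_Lt k, - gen_Lt k})"

lemma mem_short_vectors:
  assumes "x \<in> Lt" "qnorm q (n + 1) x < R"
  shows "x \<in> short_vectors"
proof -
  obtain y where y: "y \<in> Lp" "x = lift n lift_weight y"
    using Lt_in_lift_Lp assms(1) by blast
  have "qnorm q n y < R"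
    using qnorm_le_qnorm_lift[of q n y lift_weight] y(2) assms(2) by simp
  with y(1) have "y \<in> Lp \<inter> qball q n R" by (simp add: qball_def)
  then have "y \<in> {(\<lambda>j. 0)} \<union> {W i | i. i \<in> {1..n}} \<union> {(\<lambda>j. - W i j) | i. i \<in> {1..n}} \<union> {u, (\<lambda>j. - u j)}"
    unfolding R_ball .
  then consider "y = (\<lambda>j. 0)" | k where "k \<in> {0..n}" "y = gen_Lp k \<or> y = - gen_Lp k"
    unfolding gen_Lp_def fun_Compl_def by force
  then show ?thesis
  proof cases
    case 1
    then show ?thesis using y(2) by (simp add: short_vectors_def lift_zero)
  next
    case (2 k)
    then have "x = gen_Lt k \<or> x = - gen_Lt k"
      using y(2) by (auto simp: gen_Lt_lift lift_uminus)
    then show ?thesis using 2(1) unfolding short_vectors_def by blast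
  qed
qed

lemma sum_split_first: "(\<Sum>j\<in>{1..n}. f j) = f 1 + (\<Sum>j\<in>{2..n}. f j)"
  using n_ge by (subst sum.atLeast_Suc_atMost) (simp_all add: numeral_2_eq_2)

lemma sum_pow_u: "(\<Sum>j\<in>{1..n}. \<bar>u j\<bar> ^ q) = real p ^ q"
proof -
  have "(\<Sum>j\<in>{2..n}. \<bar>u j\<bar> ^ q) = (\<Sum>j\<in>{Suc 1..Suc (n - 1)}. real_of_int (\<sigma> (j - 1) ^ q))"
  proof (rule sum.cong)
    fix j assume "j \<in> {Suc 1..Suc (n - 1)}"
    then have "j \<in> {2..n}" by auto
    then show "\<bar>u j\<bar> ^ q = real_of_int (\<sigma> (j - 1) ^ q)"
      using u_sigma sigma_2_3 by fastforce
  qed (use n_ge in auto)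
  also have "\<dots> = real_of_int (\<Sum>i\<in>{1..n - 1}. \<sigma> i ^ q)"
    by (simp only: sum.shift_bounds_cl_Suc_ivl of_int_sum) simp
  also have "\<dots> = real p ^ q - 1"
    using sigma_sum by simp
  finally show ?thesis
    using sum_split_first[of "\<lambda>j. \<bar>u j\<bar> ^ q"] u_1 by simp
qed

lemma sum_pow_gen_Lt:
  assumes "k \<in> {0..n}"
  shows "(\<Sum>j\<in>{1..n}. \<bar>gen_Lt k j\<bar> ^ q) = real p ^ q"
proof (cases "k = 0")
  case True
  then show ?thesis using sum_pow_u by (simp add: gen_Lt_def ut_apply)
next
  case False
  then have "(\<Sum>j\<in>{1..n}. \<bar>gen_Lt k j\<bar> ^ q) = (\<Sum>j\<in>{1..n}. if j = k then real p ^ q else 0)"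
    using q_pos by (intro sum.cong) (simp_all add: gen_Lt_def v_apply)
  also have "\<dots> = real p ^ q"
    using False assms by simp
  finally show ?thesis .
qed

lemma ut_last_bound: "\<bar>ut (n + 1)\<bar> ^ q < R ^ q - real p ^ q"
proof -
  define M where "M = real ((n - 1) * (p - 1) + 1)"
  have M_pos: "M > 0" unfolding M_def by (simp only: of_nat_0_less_iff)
  define S where "S = (\<Sum>m\<in>{2..n}. u m)"
  have S_nonneg: "S \<ge> 0" unfolding S_def using u_2_3 by (intro sum_nonneg) fastforce
  have "S \<le> 3 * real (n - 1)"
  proof -
    have "S \<le> (\<Sum>m\<in>{2..n}. 3)" unfolding S_def using u_2_3 by (intro sum_mono) fastforce
    then show ?thesis by simp
  qed
  moreover have "6 * real (n - 1) \<le> real (n - 1) * (real p - 1)"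
    using p_ge by (subst mult.commute) (intro mult_left_mono, simp_all)
  ultimately have S_le: "1 + 2 * S \<le> M"
    unfolding M_def using p_ge by (simp add: of_nat_diff)
  have "ut (n + 1) = (\<Sum>m\<in>{1..n}. lift_weight m * u m)"
    by (simp add: ut_lift lift_last)
  also have "\<dots> = \<epsilon> / real p * (1 + 2 * S)"
    unfolding sum_split_first[of "\<lambda>m. lift_weight m * u m"] S_def
    using u_1 by (simp add: lift_weight_def sum_distrib_left algebra_simps)
  finally have ut_last: "ut (n + 1) = \<epsilon> / real p * (1 + 2 * S)" .
  have "\<bar>ut (n + 1)\<bar> ^ q \<le> (\<epsilon> * M / real p) ^ q"
    unfolding ut_last using eps_pos p_pos S_nonneg S_le
    by (intro power_mono) (simp_all add: divide_right_mono mult_left_mono)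
  also have "\<dots> = \<epsilon> ^ q * M ^ q / real p ^ q"
    by (simp add: power_divide power_mult_distrib)
  also have "\<dots> < R ^ q - real p ^ q"
    using eps2 M_pos p_pos unfolding M_def[symmetric]
    by (simp add: pos_less_divide_eq pos_divide_less_eq mult.commute)
  finally show ?thesis .
qed

lemma v_last_bound:
  assumes "k \<noteq> 1"
  shows "\<bar>v k (n + 1)\<bar> ^ q < R ^ q - real p ^ q"
proof -
  have "\<bar>v k (n + 1)\<bar> ^ q + real p ^ q = (2 * \<epsilon>) ^ q + real p ^ q"
    using assms eps_pos by (simp add: v_last)
  also have "\<dots> \<le> (2 * \<epsilon> + real p) ^ q"
    using eps_pos q_pos by (intro add_pow_le_pow_add) simp_all
  also have "\<dots> = (real p + 2 * \<epsilon>) ^ q"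
    by (simp add: add.commute)
  also have "\<dots> < R ^ q"
    using eps1 eps_pos q_pos by (intro power_strict_mono) auto
  finally show ?thesis by simp
qed

lemma qnorm_gen_Lt_less:
  assumes "k \<in> {0..n}" "k \<noteq> 1"
  shows "qnorm q (n + 1) (gen_Lt k) < R"
proof (rule qnorm_less[OF q_pos])
  show "R > 0" using R_gt p_pos by linarith
  have "\<bar>gen_Lt k (n + 1)\<bar> ^ q < R ^ q - real p ^ q"
    using assms ut_last_bound v_last_bound by (simp add: gen_Lt_def)
  then show "(\<Sum>j\<in>{1..n + 1}. \<bar>gen_Lt k j\<bar> ^ q) < R ^ q"
    using sum_pow_gen_Lt[OF assms(1)] by simp
qed

lemma gen_Lt_in_Lt: "k \<in> {0..n} \<Longrightarrow> gen_Lt k \<in> Lt"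
  unfolding Lt_int_span by (rule int_span_generator) simp_all

definition short_basis :: "nat \<Rightarrow> nat \<Rightarrow> real" where
  "short_basis i = gen_Lt (if i = 1 then 0 else i)"

lemma v1_int_comb_short_basis:
  "v 1 = int_comb {1..n} (\<lambda>i. if i = 1 then int p else - \<sigma> (i - 1)) short_basis"
proof
  fix j
  have "real p * ut j = v 1 j + (\<Sum>i\<in>{2..n}. u i * v i j)"
    using sum_split_first[of "\<lambda>i. u i * v i j"] u_1 p_pos by (simp add: ut_def)
  moreover have "(\<Sum>i\<in>{2..n}. of_int (- \<sigma> (i - 1)) * v i j) = - (\<Sum>i\<in>{2..n}. u i * v i j)"
    by (simp add: u_sigma sum_negf)
  ultimately show "v 1 j = int_comb {1..n} (\<lambda>i. if i = 1 then int p else - \<sigma> (i - 1)) short_basis j"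
    unfolding int_comb_apply sum_split_first by (simp add: short_basis_def gen_Lt_def)
qed

lemma gen_Lt_in_span_short_basis:
  assumes "k \<in> {0..n}"
  shows "gen_Lt k \<in> range (\<lambda>c. int_comb {1..n} c short_basis)"
proof (cases "k = 1")
  case True
  then show ?thesis using v1_int_comb_short_basis by (simp add: gen_Lt_def)
next
  case False
  define i where "i = (if k = 0 then 1 else k)"
  have "i \<in> {1..n}" "short_basis i = gen_Lt k"
    using assms False n_ge by (auto simp: i_def short_basis_def)
  then have "gen_Lt k = int_comb {1..n} (\<lambda>l. if l = i then 1 else 0) short_basis"
    using int_comb_unit[of "{1..n}" i short_basis] by simp
  then show ?thesis by blast
qed

lemma int_comb_short_basis_apply:
  assumes "j \<in> {1..n}"
  shows "int_comb {1..n} c short_basis j =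
    of_int (c 1) * u j + (if j = 1 then 0 else of_int (c j) * real p)"
proof -
  have "(\<Sum>i\<in>{2..n}. of_int (c i) * v i j) =
      (\<Sum>i\<in>{2..n}. if i = j then of_int (c j) * real p else 0)"
    using assms by (intro sum.cong) (simp_all add: v_apply)
  also have "\<dots> = (if j = 1 then 0 else of_int (c j) * real p)"
    using assms by auto
  finally show ?thesis
    unfolding int_comb_apply sum_split_first using assms
    by (simp add: short_basis_def gen_Lt_def ut_apply)
qed

lemma is_lattice_basis_short_basis: "is_lattice_basis Lt n short_basis"
proof (rule is_lattice_basisI)
  show "\<forall>i\<in>{1..n}. short_basis i \<in> Lt"
    by (auto simp: short_basis_def intro: gen_Lt_in_Lt)
  show "Lt \<subseteq> range (\<lambda>c. int_comb {1..n} c short_basis)"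
    unfolding Lt_int_span int_span_image[OF finite_atLeastAtMost]
    using gen_Lt_in_span_short_basis by (auto intro: int_comb_of_int_combs)
next
  fix c assume zero: "int_comb {1..n} c short_basis = (\<lambda>j. 0)"
  have c1: "c 1 = 0"
    using fun_cong[OF zero, of 1] n_ge int_comb_short_basis_apply[of 1 c] u_1 by simp
  show "\<forall>i\<in>{1..n}. c i = 0"
  proof
    fix i assume i: "i \<in> {1..n}"
    show "c i = 0"
      using fun_cong[OF zero, of i] int_comb_short_basis_apply[OF i, of c] c1 p_pos
      by (cases "i = 1") simp_all
  qed
qed

lemma qnorm_short_basis_less: "i \<in> {1..n} \<Longrightarrow> qnorm q (n + 1) (short_basis i) < R"
  unfolding short_basis_def by (rule qnorm_gen_Lt_less) auto

lemma gen_Lt_coord_eq_p: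
  assumes "k \<in> {1..n}" "k' \<in> {0..n}" "\<bar>gen_Lt k' k\<bar> = real p"
  shows "k' = k"
proof (rule ccontr)
  assume "k' \<noteq> k"
  then have "\<bar>gen_Lt k' k\<bar> \<le> 3"
    using assms(1) u_bounds[OF assms(1)] by (auto simp: gen_Lt_def ut_apply v_apply)
  then show False using assms(3) p_ge by simp
qed

lemma gen_Lt_abs_inj:
  assumes "k \<in> {0..n}" "k' \<in> {0..n}" "\<And>j. \<bar>gen_Lt k j\<bar> = \<bar>gen_Lt k' j\<bar>"
  shows "k = k'"
proof -
  have diag: "\<bar>gen_Lt l l\<bar> = real p" if "l \<in> {1..n}" for l
    using that by (simp add: gen_Lt_def v_apply)
  show ?thesis
  proof (cases "k = 0")
    case True
    show ?thesis
    proof (rule ccontr)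
      assume "k \<noteq> k'"
      then have k': "k' \<in> {1..n}" using True assms(2) by auto
      then have "\<bar>gen_Lt k k'\<bar> = real p" using assms(3)[of k'] diag by simp
      then have "k = k'" by (rule gen_Lt_coord_eq_p[OF k' assms(1)])
      with \<open>k \<noteq> k'\<close> show False ..
    qed
  next
    case False
    then have k: "k \<in> {1..n}" using assms(1) by auto
    then have "\<bar>gen_Lt k' k\<bar> = real p" using assms(3)[of k] diag by simp
    then show ?thesis by (rule gen_Lt_coord_eq_p[OF k assms(2), symmetric])
  qed
qed

lemma short_vector_coord_multiple:
  assumes "x \<in> short_vectors" "x \<noteq> gen_Lt k" "x \<noteq> - gen_Lt k"
    and "\<forall>k'\<in>{0..n}. k' \<noteq> k \<longrightarrow> (\<exists>m::int. gen_Lt k' j = d * of_int m)"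
  shows "\<exists>m::int. x j = d * of_int m"
proof -
  consider "x = (\<lambda>j. 0)" | k' where "k' \<in> {0..n}" "k' \<noteq> k" "x = gen_Lt k' \<or> x = - gen_Lt k'"
    using assms(1-3) unfolding short_vectors_def by blast
  then show ?thesis
  proof cases
    case 1
    then show ?thesis by (intro exI[of _ 0]) simp
  next
    case (2 k')
    then obtain m :: int where "gen_Lt k' j = d * of_int m" using assms(4) by blast
    then show ?thesis using 2(3) by (auto intro: exI[of _ m] exI[of _ "- m"])
  qed
qed

lemma short_basis_hits_gen_Lt:
  assumes b: "is_lattice_basis Lt n b" "\<forall>i\<in>{1..n}. b i \<in> short_vectors"
    and k: "k \<in> {0..n}"
    and others: "\<forall>k'\<in>{0..n}. k' \<noteq> k \<longrightarrow> (\<exists>m::int. gen_Lt k' j = d * of_int m)"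
    and self: "\<nexists>m::int. gen_Lt k j = d * of_int m"
  shows "\<exists>i\<in>{1..n}. b i = gen_Lt k \<or> b i = - gen_Lt k"
proof (rule ccontr)
  assume "\<not> ?thesis"
  then have "\<forall>i\<in>{1..n}. \<exists>m::int. b i j = d * of_int m"
    using b(2) others by (blast intro: short_vector_coord_multiple)
  then show False
    using lattice_basis_coord_multiple[OF b(1) gen_Lt_in_Lt[OF k]] self by blast
qed

lemma short_basis_hits_ut:
  assumes "is_lattice_basis Lt n b" "\<forall>i\<in>{1..n}. b i \<in> short_vectors"
  shows "\<exists>i\<in>{1..n}. b i = gen_Lt 0 \<or> b i = - gen_Lt 0"
proof (rule short_basis_hits_gen_Lt[OF assms, of 0 1 "real p"])
  show "\<forall>k'\<in>{0..n}. k' \<noteq> 0 \<longrightarrow> (\<exists>m::int. gen_Lt k' 1 = real p * of_int m)"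
    using n_ge by (auto simp: gen_Lt_def v_apply intro: exI[of _ 1] exI[of _ 0])
  show "\<nexists>m::int. gen_Lt 0 1 = real p * of_int m"
  proof
    assume "\<exists>m::int. gen_Lt 0 1 = real p * of_int m"
    then obtain m :: int where "real_of_int 1 = real_of_int (int p * m)"
      using n_ge u_1 by (auto simp: gen_Lt_def ut_apply)
    then have "int p * m = 1" by (simp only: of_int_eq_iff)
    then show False using p_ge by (auto simp: zmult_eq_1_iff)
  qed
qed simp

lemma short_basis_hits_v:
  assumes "is_lattice_basis Lt n b" "\<forall>i\<in>{1..n}. b i \<in> short_vectors"
    and k: "k \<in> {2..n}"
  shows "\<exists>i\<in>{1..n}. b i = gen_Lt k \<or> b i = - gen_Lt k"
proof (rule short_basis_hits_gen_Lt[OF assms(1,2), of k k "u k"])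
  show "\<forall>k'\<in>{0..n}. k' \<noteq> k \<longrightarrow> (\<exists>m::int. gen_Lt k' k = u k * of_int m)"
    using k by (auto simp: gen_Lt_def ut_apply v_apply intro: exI[of _ 1] exI[of _ 0])
  show "\<nexists>m::int. gen_Lt k k = u k * of_int m"
  proof
    assume "\<exists>m::int. gen_Lt k k = u k * of_int m"
    then obtain m :: int where "real_of_int (int p) = real_of_int (\<sigma> (k - 1) * m)"
      using k by (auto simp: gen_Lt_def v_apply u_sigma)
    then have "\<sigma> (k - 1) dvd int p" by (simp only: of_int_eq_iff) simp
    moreover have "\<sigma> (k - 1) \<ge> 0" using sigma_2_3[OF k] by auto
    moreover have "prime (int p)"
      using p_prime by simp
    ultimately have "\<sigma> (k - 1) = 1 \<or> \<sigma> (k - 1) = int p"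
      unfolding prime_int_iff by auto
    then show False
      using sigma_2_3[OF k] p_ge by auto
  qed
qed (use k in simp)

lemma short_basis_avoids_v1:
  assumes b: "is_lattice_basis Lt n b" "\<forall>i\<in>{1..n}. b i \<in> short_vectors"
    and i: "i \<in> {1..n}" "b i = v 1 \<or> b i = - v 1"
  shows False
proof -
  have "\<forall>k\<in>{0..n}. \<exists>i\<in>{1..n}. b i = gen_Lt k \<or> b i = - gen_Lt k"
  proof
    fix k assume k: "k \<in> {0..n}"
    consider "k = 0" | "k = 1" | "k \<in> {2..n}" using k by fastforce
    then show "\<exists>i\<in>{1..n}. b i = gen_Lt k \<or> b i = - gen_Lt k"
    proof cases
      case 1 then show ?thesis using short_basis_hits_ut[OF b] by simp
    next
      case 2 then show ?thesis using i by (auto simp: gen_Lt_def)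
    next
      case 3 then show ?thesis using short_basis_hits_v[OF b] by simp
    qed
  qed
  then have "\<forall>k\<in>{0..n}. \<exists>i. i \<in> {1..n} \<and> (b i = gen_Lt k \<or> b i = - gen_Lt k)"
    by blast
  from bchoice[OF this] obtain f
    where f: "\<forall>k\<in>{0..n}. f k \<in> {1..n} \<and> (b (f k) = gen_Lt k \<or> b (f k) = - gen_Lt k)"
    by blast
  have "inj_on f {0..n}"
  proof (rule inj_onI)
    fix k k' assume k: "k \<in> {0..n}" and k': "k' \<in> {0..n}" and "f k = f k'"
    have "b (f k) = gen_Lt k \<or> b (f k) = - gen_Lt k" "b (f k') = gen_Lt k' \<or> b (f k') = - gen_Lt k'"
      using f k k' by blast+
    then have "\<bar>gen_Lt k j\<bar> = \<bar>b (f k) j\<bar>" "\<bar>gen_Lt k' j\<bar> = \<bar>b (f k') j\<bar>" for j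
      by auto
    then show "k = k'"
      using gen_Lt_abs_inj[OF k k'] \<open>f k = f k'\<close> by simp
  qed
  then have "card {0..n} \<le> card {1..n}"
    using f by (intro card_inj_on_le) auto
  then show False by simp
qed

lemma minimal_basis_avoids_v1:
  assumes "is_lattice_basis Lt n b"
    and "\<forall>b'. is_lattice_basis Lt n b' \<longrightarrow>
           (MAX i\<in>{1..n}. qnorm q (n + 1) (b i)) \<le> (MAX i\<in>{1..n}. qnorm q (n + 1) (b' i))"
    and "i \<in> {1..n}"
  shows "b i \<noteq> v 1 \<and> b i \<noteq> - v 1"
proof -
  have "\<forall>k\<in>{1..n}. b k \<in> short_vectors"
  proof
    fix k assume k: "k \<in> {1..n}"
    have "b k \<in> Lt"
      using assms(1) k by (rule lattice_basis_mem)
    moreover have "qnorm q (n + 1) (b k) < R"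
    proof (rule minimal_basis_bounded[OF _ is_lattice_basis_short_basis _ assms(2) k])
      show "1 \<le> n" using n_ge by simp
      show "\<forall>i\<in>{1..n}. qnorm q (n + 1) (short_basis i) < R"
        using qnorm_short_basis_less by blast
    qed
    ultimately show "b k \<in> short_vectors"
      by (rule mem_short_vectors)
  qed
  then show ?thesis
    using short_basis_avoids_v1[OF assms(1)] assms(3) by blast
qed

end

theorem lemma4p7:
  fixes q p n :: nat and \<sigma> :: "nat \<Rightarrow> int" and R \<epsilon> :: real
    and W :: "nat \<Rightarrow> nat \<Rightarrow> real" and u :: "nat \<Rightarrow> real"
    and v :: "nat \<Rightarrow> nat \<Rightarrow> real" and ut :: "nat \<Rightarrow> real"
    and Lp Lt :: "(nat \<Rightarrow> real) set"
  assumes q_pos: "q \<ge> 1"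
    and p_prime: "prime p" and p_ge: "p \<ge> 7"
    and n_ge: "n \<ge> 2"
    and sigma_vals: "\<forall>i\<in>{1..n-1}. \<sigma> i \<in> {2, 3}"
    and sigma_sum: "(\<Sum>i\<in>{1..n-1}. \<sigma> i ^ q) = int p ^ q - 1"
    and sigma_min: "\<forall>k::int. \<not> (k mod int p = 0) \<and> \<not> ((k - 1) mod int p = 0) \<and> \<not> ((k + 1) mod int p = 0)
         \<longrightarrow> qnorm_mod q p (n-1) (\<lambda>i. of_int (k * \<sigma> i)) > qnorm_mod q p (n-1) (\<lambda>i. of_int (\<sigma> i))"
    and q2: "q \<ge> 2 \<longrightarrow> 4 * n - 3 > 2 * p"
    and u_def: "u = (\<lambda>j. if j = 1 then 1 else if 2 \<le> j \<and> j \<le> n then of_int (\<sigma> (j - 1)) else 0)"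
    and W_def: "\<forall>i. W i = (\<lambda>j. real p * unitvec i j)"
    and Lp_def: "Lp = int_span ({W i | i. i \<in> {1..n}} \<union> {u})"
    and R_gt: "R > real p"
    and R_ball: "Lp \<inter> qball q n R = {(\<lambda>j. 0)} \<union> {W i | i. i \<in> {1..n}} \<union> {(\<lambda>j. - W i j) | i. i \<in> {1..n}} \<union> {u, (\<lambda>j. - u j)}"
    and eps_pos: "\<epsilon> > 0"
    and eps1: "\<epsilon> < (R - real p) / 2"
    and eps2: "\<epsilon> ^ q < real p ^ q * (R ^ q - real p ^ q) / (real ((n - 1) * (p - 1) + 1)) ^ q"
    and v_def: "\<forall>i. v i = (\<lambda>j. if j \<le> n then W i j else if j = n + 1 then (if i = 1 then \<epsilon> else 2 * \<epsilon>) else 0)"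
    and ut_def: "ut = (\<lambda>j. (1 / real p) * (\<Sum>i\<in>{1..n}. u i * v i j))"
    and Lt_def: "Lt = int_span ({v i | i. i \<in> {1..n}} \<union> {ut})"
  shows "\<forall>b. is_lattice_basis Lt n b \<and>
           (\<forall>b'. is_lattice_basis Lt n b' \<longrightarrow>
              (MAX i\<in>{1..n}. qnorm q (n + 1) (b i)) \<le> (MAX i\<in>{1..n}. qnorm q (n + 1) (b' i)))
         \<longrightarrow> (\<forall>i\<in>{1..n}. b i \<noteq> v 1 \<and> b i \<noteq> (\<lambda>j. - v 1 j))"
proof (intro allI impI ballI)
  fix b i
  assume min: "is_lattice_basis Lt n b \<and> (\<forall>b'. is_lattice_basis Lt n b' \<longrightarrow>
      (MAX i\<in>{1..n}. qnorm q (n + 1) (b i)) \<le> (MAX i\<in>{1..n}. qnorm q (n + 1) (b' i)))"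
    and i: "i \<in> {1..n}"
  interpret lifted_lattice q p n \<sigma> R \<epsilon> W u v ut Lp Lt
    by unfold_locales (fact q_pos p_prime p_ge n_ge sigma_vals sigma_sum u_def W_def Lp_def R_gt
        R_ball eps_pos eps1 eps2 v_def ut_def Lt_def)+
  show "b i \<noteq> v 1 \<and> b i \<noteq> (\<lambda>j. - v 1 j)"
    using minimal_basis_avoids_v1[of b i] min i unfolding fun_Compl_def by blast
qed

end
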